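(* For every tree $T$ of order $n\ge 2$ that is not isomorphic to the star $K_{1,n-1}$, $\gamma_{rdR}(T)\ge n+2$.
   Context: All graphs are finite and simple. An RDRD function of $G$ is a function $f:V(G)\to\{0,1,2,3\}$ such that every vertex with value $0$ has at least two neighbors with value $2$ or at least one neighbor with value $3$, every vertex with value $1$ has a neighbor with value $2$ or $3$, and the subgraph induced by the vertices with value $0$ has no isolated vertices; $\gamma_{rdR}(G)$ is the minimum of $\sum_v f(v)$ over RDRD functions. *)

theory Defs
  imports Main
begin

definition simple_graph :: "'a set \<Rightarrow> ('a \<Rightarrow> 'a \<Rightarrow> bool) \<Rightarrow> bool" where
  "simple_graph V E \<longleftrightarrow> finite V \<and> (\<forall>u v. E u v \<longrightarrow> u \<in> V \<and> v \<in> V)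
     \<and> (\<forall>u v. E u v \<longrightarrow> E v u) \<and> (\<forall>v. \<not> E v v)"

definition connected_graph :: "'a set \<Rightarrow> ('a \<Rightarrow> 'a \<Rightarrow> bool) \<Rightarrow> bool" where
  "connected_graph V E \<longleftrightarrow> (\<forall>u\<in>V. \<forall>v\<in>V. E\<^sup>*\<^sup>* u v)"

definition is_cycle :: "'a set \<Rightarrow> ('a \<Rightarrow> 'a \<Rightarrow> bool) \<Rightarrow> 'a list \<Rightarrow> bool" where
  "is_cycle V E xs \<longleftrightarrow> length xs \<ge> 3 \<and> distinct xs \<and> set xs \<subseteq> V
     \<and> (\<forall>i. Suc i < length xs \<longrightarrow> E (xs ! i) (xs ! Suc i)) \<and> E (last xs) (hd xs)"

definition acyclic_graph :: "'a set \<Rightarrow> ('a \<Rightarrow> 'a \<Rightarrow> bool) \<Rightarrow> bool" where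
  "acyclic_graph V E \<longleftrightarrow> \<not> (\<exists>xs. is_cycle V E xs)"

definition is_tree :: "'a set \<Rightarrow> ('a \<Rightarrow> 'a \<Rightarrow> bool) \<Rightarrow> bool" where
  "is_tree V E \<longleftrightarrow> simple_graph V E \<and> V \<noteq> {} \<and> connected_graph V E \<and> acyclic_graph V E"

definition star_edges :: "nat \<Rightarrow> nat \<Rightarrow> bool" where
  "star_edges i j \<longleftrightarrow> i \<noteq> j \<and> (i = 0 \<or> j = 0)"

definition graph_iso :: "'a set \<Rightarrow> ('a \<Rightarrow> 'a \<Rightarrow> bool) \<Rightarrow> 'b set \<Rightarrow> ('b \<Rightarrow> 'b \<Rightarrow> bool) \<Rightarrow> bool" where
  "graph_iso V E W F \<longleftrightarrow> (\<exists>f. bij_betw f V W \<and> (\<forall>u\<in>V. \<forall>v\<in>V. E u v \<longleftrightarrow> F (f u) (f v)))"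

definition is_star :: "'a set \<Rightarrow> ('a \<Rightarrow> 'a \<Rightarrow> bool) \<Rightarrow> nat \<Rightarrow> bool" where
  "is_star V E n \<longleftrightarrow> graph_iso V E {0..<n} star_edges"

definition rdrd_fun :: "'a set \<Rightarrow> ('a \<Rightarrow> 'a \<Rightarrow> bool) \<Rightarrow> ('a \<Rightarrow> nat) \<Rightarrow> bool" where
  "rdrd_fun V E f \<longleftrightarrow> (\<forall>v\<in>V. f v \<le> 3)
     \<and> (\<forall>v\<in>V. f v = 0 \<longrightarrow> card {w. E v w \<and> f w = 2} \<ge> 2 \<or> (\<exists>w. E v w \<and> f w = 3))
     \<and> (\<forall>v\<in>V. f v = 1 \<longrightarrow> (\<exists>w. E v w \<and> (f w = 2 \<or> f w = 3)))
     \<and> (\<forall>v\<in>V. f v = 0 \<longrightarrow> (\<exists>w. E v w \<and> f w = 0))"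

definition weight :: "'a set \<Rightarrow> ('a \<Rightarrow> nat) \<Rightarrow> nat" where
  "weight V f = (\<Sum>v\<in>V. f v)"

definition gamma_rdR :: "'a set \<Rightarrow> ('a \<Rightarrow> 'a \<Rightarrow> bool) \<Rightarrow> nat" where
  "gamma_rdR V E = Min {weight V f | f. rdrd_fun V E f}"

end

theory Submission
  imports Defs
begin

text \<open>
  Write \<open>V\<^sub>0\<close> for the vertices with value 0 and \<open>H\<close> for those with value 2 or 3.
  Summing \<open>f v + [f v = 0] = 1 + [v \<in> H] (f v - 1)\<close> over \<open>V\<close> shows that
  \<open>w(f) \<ge> n + 2\<close> amounts to \<open>|V\<^sub>0| + 2 \<le> \<Sum>\<^sub>v\<^sub>\<in>\<^sub>H (f v - 1)\<close>.
  If \<open>V\<^sub>0 = {}\<close> and the right-hand side were at most 1, then \<open>H\<close> would be a single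
  vertex of value 2 dominating all other vertices, and \<open>T\<close> would be a star.
  Otherwise root \<open>T\<close> at a vertex of \<open>V\<^sub>0\<close>. Every vertex of \<open>V\<^sub>0\<close> needs weight 2 from
  \<open>H\<close>; a vertex \<open>x \<in> H\<close> with \<open>d\<close> neighbours in \<open>V\<^sub>0\<close> supplies \<open>(f x - 1) d\<close>, and all
  but one of these neighbours are children of \<open>x\<close>, i.e. vertices of \<open>V\<^sub>0\<close> whose parent
  is outside \<open>V\<^sub>0\<close>. Since \<open>V\<^sub>0\<close> induces no isolated vertex, each such vertex has a
  child in \<open>V\<^sub>0\<close>, and so does the root, so there are at most \<open>(|V\<^sub>0| - 2)/2\<close> of them.
\<close>

definition is_path :: "'a set \<Rightarrow> ('a \<Rightarrow> 'a \<Rightarrow> bool) \<Rightarrow> 'a list \<Rightarrow> bool" where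
  "is_path V E xs \<longleftrightarrow> distinct xs \<and> set xs \<subseteq> V
     \<and> (\<forall>i. Suc i < length xs \<longrightarrow> E (xs ! i) (xs ! Suc i))"

lemma is_path_rev:
  assumes "is_path V E xs" and "\<And>u v. E u v \<Longrightarrow> E v u"
  shows "is_path V E (rev xs)"
  unfolding is_path_def
proof (intro conjI allI impI)
  show "distinct (rev xs)" "set (rev xs) \<subseteq> V" using assms(1) unfolding is_path_def by auto
  fix i assume i: "Suc i < length (rev xs)"
  let ?j = "length xs - Suc (Suc i)"
  have "E (xs ! ?j) (xs ! Suc ?j)" using assms(1) i unfolding is_path_def by auto
  moreover have "Suc ?j = length xs - Suc i" using i by simp
  ultimately show "E (rev xs ! i) (rev xs ! Suc i)"
    using i assms(2) by (simp add: rev_nth)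
qed

lemma is_path_length_le_card:
  assumes "is_path V E xs" and "finite V"
  shows "length xs \<le> card V"
  using assms card_mono[of V "set xs"] distinct_card[of xs] unfolding is_path_def by auto

text \<open>An end vertex of a longest path in an acyclic graph is a leaf: a further neighbour
  would either extend the path or close a cycle with it.\<close>
lemma longest_path_hd_leaf:
  assumes sg: "simple_graph V E" and ac: "acyclic_graph V E"
    and p: "is_path V E xs" and len: "length xs \<ge> 2"
    and longest: "\<And>ys. is_path V E ys \<Longrightarrow> length ys \<le> length xs"
    and e: "E (hd xs) w"
  shows "w = xs ! 1"
proof -
  have hd0: "hd xs = xs ! 0" using len by (cases xs) auto
  have "w \<in> set xs"
  proof (rule ccontr)
    assume w: "w \<notin> set xs"
    have "is_path V E (w # xs)"
      unfolding is_path_def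
    proof (intro conjI allI impI)
      show "distinct (w # xs)" "set (w # xs) \<subseteq> V"
        using p w e sg unfolding is_path_def simple_graph_def by auto
      fix i assume "Suc i < length (w # xs)"
      then show "E ((w # xs) ! i) ((w # xs) ! Suc i)"
        using p e hd0 sg unfolding is_path_def simple_graph_def by (cases i) auto
    qed
    from longest[OF this] show False by simp
  qed
  then obtain i where i: "i < length xs" "xs ! i = w" by (auto simp: in_set_conv_nth)
  have "i \<noteq> 0"
  proof
    assume "i = 0"
    then show False using i e sg hd0 unfolding simple_graph_def by auto
  qed
  moreover have "\<not> i \<ge> 2"
  proof
    assume i2: "i \<ge> 2"
    let ?c = "take (Suc i) xs"
    have "is_cycle V E ?c"
      unfolding is_cycle_def
    proof (intro conjI allI impI)
      show "3 \<le> length ?c" using i i2 by simp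
      show "distinct ?c" "set ?c \<subseteq> V"
        using p set_take_subset[of "Suc i" xs] unfolding is_path_def by auto
      fix j assume "Suc j < length ?c"
      then show "E (?c ! j) (?c ! Suc j)" using p unfolding is_path_def by auto
    next
      have "last ?c = w" using i by (simp add: take_Suc_conv_app_nth)
      moreover have "hd ?c = hd xs" using i by simp
      ultimately show "E (last ?c) (hd ?c)" using e sg unfolding simple_graph_def by auto
    qed
    then show False using ac unfolding acyclic_graph_def by blast
  qed
  ultimately show ?thesis using i by (metis One_nat_def less_2_cases not_le)
qed

lemma longest_path_exists:
  assumes "finite V" and "is_path V E xs0"
  obtains xs where "is_path V E xs" "length xs0 \<le> length xs"
    "\<And>ys. is_path V E ys \<Longrightarrow> length ys \<le> length xs"
proof -
  obtain k where "\<exists>xs. is_path V E xs \<and> length xs = k"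
    and k_max: "\<And>ys. is_path V E ys \<Longrightarrow> length ys \<le> k"
    using Nat.ex_has_greatest_nat[of "\<lambda>k. \<exists>xs. is_path V E xs \<and> length xs = k" "length xs0" "card V"]
      assms is_path_length_le_card by blast
  then show ?thesis using that k_max assms(2) by blast
qed

lemma is_path_hd_edge:
  assumes "is_path V E xs" and "length xs \<ge> 2"
  shows "E (hd xs) (xs ! 1)"
proof -
  have "E (xs ! 0) (xs ! Suc 0)" using assms unfolding is_path_def by auto
  moreover have "xs \<noteq> []" using assms(2) by auto
  ultimately show ?thesis by (simp add: hd_conv_nth)
qed

lemma tree_has_leaf_avoiding:
  assumes t: "is_tree V E" and c: "card V \<ge> 2" and r: "r \<in> V"
  obtains l u where "l \<in> V" "l \<noteq> r" "E l u" "\<And>w. E l w \<Longrightarrow> w = u"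
proof -
  have sg: "simple_graph V E" and ac: "acyclic_graph V E" and cn: "connected_graph V E"
    using t unfolding is_tree_def by auto
  have fin: "finite V" and sym: "\<And>u v. E u v \<Longrightarrow> E v u"
    using sg unfolding simple_graph_def by auto
  obtain a b where ab: "a \<in> V" "b \<in> V" "a \<noteq> b"
    using c card_le_Suc0_iff_eq[OF fin] by (metis not_less_eq_eq numeral_2_eq_2)
  have "E\<^sup>*\<^sup>* a b" using cn ab unfolding connected_graph_def by auto
  then obtain c where "E a c" using ab(3) by (metis converse_rtranclpE)
  then have "is_path V E [a, c]"
    using ab sg unfolding is_path_def simple_graph_def by (auto simp: less_Suc_eq)
  then obtain xs where xs: "is_path V E xs" and "length [a, c] \<le> length xs"
    and longest: "\<And>ys. is_path V E ys \<Longrightarrow> length ys \<le> length xs"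
    by (rule longest_path_exists[OF fin]) blast
  then have len: "length xs \<ge> 2" by simp
  have rxs: "is_path V E (rev xs)" using is_path_rev[OF xs sym] .
  have "xs \<noteq> []" using len by auto
  then have ends: "hd xs \<in> V" "hd (rev xs) \<in> V" "hd xs \<noteq> hd (rev xs)"
    using xs len unfolding is_path_def
    by (auto simp: hd_rev hd_conv_nth last_conv_nth nth_eq_iff_index_eq)
  have leaf: "\<And>w. E (hd ys) w \<Longrightarrow> w = ys ! 1" if "ys \<in> {xs, rev xs}" for ys
    using that longest_path_hd_leaf[OF sg ac xs len longest]
      longest_path_hd_leaf[OF sg ac rxs] len longest by auto
  show ?thesis
  proof (cases "hd xs = r")
    case True
    then show ?thesis
      using that[OF ends(2) _ is_path_hd_edge[OF rxs] leaf] ends(3) len by simp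
  next
    case False
    then show ?thesis
      using that[OF ends(1) _ is_path_hd_edge[OF xs] leaf] len by simp
  qed
qed

lemma connected_graph_delete_leaf:
  assumes cn: "connected_graph V E" and sym: "\<And>a b. E a b \<Longrightarrow> E b a"
    and leaf: "\<And>w. E l w \<Longrightarrow> w = u" and "u \<noteq> l"
  shows "connected_graph (V - {l}) (\<lambda>a b. E a b \<and> a \<noteq> l \<and> b \<noteq> l)"
proof -
  let ?E = "\<lambda>a b. E a b \<and> a \<noteq> l \<and> b \<noteq> l"
  have "(?E\<^sup>*\<^sup>* a b \<and> b \<noteq> l) \<or> (b = l \<and> ?E\<^sup>*\<^sup>* a u)" if "E\<^sup>*\<^sup>* a b" "a \<noteq> l" for a b
    using that
  proof (induction rule: rtranclp_induct)
    case base then show ?case by simp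
  next
    case (step y z)
    show ?case
    proof (cases "y = l")
      case True
      then show ?thesis using step leaf \<open>u \<noteq> l\<close> by auto
    next
      case False
      then have ay: "?E\<^sup>*\<^sup>* a y" using step by blast
      show ?thesis
      proof (cases "z = l")
        case True
        then have "y = u" using step(2) sym leaf by blast
        then show ?thesis using ay True by simp
      next
        case False
        then show ?thesis using ay step(2) \<open>y \<noteq> l\<close> by (auto intro: rtranclp.rtrancl_into_rtrancl)
      qed
    qed
  qed
  then show ?thesis using cn unfolding connected_graph_def by blast
qed

lemma tree_delete_leaf:
  assumes t: "is_tree V E" and l: "l \<in> V" "E l u" "\<And>w. E l w \<Longrightarrow> w = u"
    and c: "card V \<ge> 2"
  shows "is_tree (V - {l}) (\<lambda>a b. E a b \<and> a \<noteq> l \<and> b \<noteq> l)"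
proof -
  let ?E = "\<lambda>a b. E a b \<and> a \<noteq> l \<and> b \<noteq> l"
  have sg: "simple_graph V E" and ac: "acyclic_graph V E" and cn: "connected_graph V E"
    using t unfolding is_tree_def by auto
  have sym: "\<And>a b. E a b \<Longrightarrow> E b a" and "u \<noteq> l"
    using sg l(2) unfolding simple_graph_def by blast+
  have "simple_graph (V - {l}) ?E" using sg unfolding simple_graph_def by auto
  moreover have "V - {l} \<noteq> {}"
  proof
    assume "V - {l} = {}"
    then have "V \<subseteq> {l}" by auto
    then show False using c card_mono[of "{l}" V] by simp
  qed
  moreover have "acyclic_graph (V - {l}) ?E"
    using ac unfolding acyclic_graph_def is_cycle_def by blast
  moreover have "connected_graph (V - {l}) ?E"
    using connected_graph_delete_leaf[OF cn sym l(3) \<open>u \<noteq> l\<close>] .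
  ultimately show ?thesis unfolding is_tree_def by blast
qed

definition parent_map :: "('a \<Rightarrow> 'a \<Rightarrow> bool) \<Rightarrow> 'a \<Rightarrow> ('a \<Rightarrow> 'a) \<Rightarrow> bool" where
  "parent_map E r p \<longleftrightarrow> (\<forall>u v. E u v \<longrightarrow> (v \<noteq> r \<and> u = p v) \<or> (u \<noteq> r \<and> v = p u))"

lemma tree_has_parent_map:
  "is_tree V E \<Longrightarrow> r \<in> V \<Longrightarrow> \<exists>p. parent_map E r p"
proof (induction "card V" arbitrary: V E rule: less_induct)
  case less
  have sg: "simple_graph V E" using less.prems unfolding is_tree_def by auto
  have fin: "finite V" and sym: "\<And>a b. E a b \<Longrightarrow> E b a"
    using sg unfolding simple_graph_def by auto
  show ?case
  proof (cases "card V \<ge> 2")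
    case False
    then have "V = {r}"
      using card_le_Suc0_iff_eq[OF fin] less.prems(2) by (auto simp: numeral_2_eq_2)
    then have "\<And>u v. \<not> E u v" using sg unfolding simple_graph_def by blast
    then show ?thesis unfolding parent_map_def by blast
  next
    case True
    obtain l u where lu: "l \<in> V" "l \<noteq> r" "E l u" "\<And>w. E l w \<Longrightarrow> w = u"
      using tree_has_leaf_avoiding[OF less.prems(1) True less.prems(2)] by blast
    let ?E = "\<lambda>a b. E a b \<and> a \<noteq> l \<and> b \<noteq> l"
    have "card (V - {l}) < card V" using fin lu(1) by (rule card_Diff1_less)
    then obtain p where p: "parent_map ?E r p"
      using less.hyps tree_delete_leaf[OF less.prems(1) lu(1,3,4) True] less.prems(2) lu(2)
      by blast
    have "parent_map E r (p(l := u))"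
      unfolding parent_map_def
    proof (intro allI impI)
      fix a b assume e: "E a b"
      consider "a = l" | "b = l" | "a \<noteq> l" "b \<noteq> l" by blast
      then show "(b \<noteq> r \<and> a = (p(l := u)) b) \<or> (a \<noteq> r \<and> b = (p(l := u)) a)"
      proof cases
        case 1 then show ?thesis using e lu by auto
      next
        case 2 then show ?thesis using sym[OF e] lu by auto
      next
        case 3 then show ?thesis using p e unfolding parent_map_def by auto
      qed
    qed
    then show ?thesis by blast
  qed
qed

lemma acyclic_universal_vertex_on_every_edge:
  assumes sg: "simple_graph V E" and ac: "acyclic_graph V E" and x: "x \<in> V"
    and adj: "\<And>v. v \<in> V \<Longrightarrow> v \<noteq> x \<Longrightarrow> E v x" and e: "E a b"
  shows "a = x \<or> b = x"
proof (rule ccontr)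
  have inV: "\<And>a b. E a b \<Longrightarrow> a \<in> V \<and> b \<in> V" and sym: "\<And>a b. E a b \<Longrightarrow> E b a"
    and irr: "\<And>a. \<not> E a a" using sg unfolding simple_graph_def by blast+
  assume "\<not> (a = x \<or> b = x)"
  then have "a \<noteq> x" "b \<noteq> x" by auto
  have ab: "a \<in> V" "b \<in> V" "a \<noteq> b" using inV[OF e] irr e by auto
  have "E x a" using sym[OF adj[OF ab(1) \<open>a \<noteq> x\<close>]] .
  moreover have "E b x" using adj[OF ab(2) \<open>b \<noteq> x\<close>] .
  ultimately have "is_cycle V E [x, a, b]"
    using e x ab \<open>a \<noteq> x\<close> \<open>b \<noteq> x\<close> unfolding is_cycle_def by (auto simp: less_Suc_eq)
  then show False using ac unfolding acyclic_graph_def by blast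
qed

lemma is_star_if_edges_through_centre:
  assumes fin: "finite V" and x: "x \<in> V" and cV: "card V = n"
    and edges: "\<And>u v. u \<in> V \<Longrightarrow> v \<in> V \<Longrightarrow> E u v \<longleftrightarrow> u \<noteq> v \<and> (u = x \<or> v = x)"
  shows "is_star V E n"
proof -
  have "card (V - {x}) = card {1..<n}" using cV fin x by simp
  then obtain g where g: "bij_betw g (V - {x}) {1..<n}"
    using finite_same_card_bij fin by blast
  define h where "h = g(x := 0)"
  have h_bij: "bij_betw h V {0..<n}"
  proof -
    have "bij_betw h (V - {x}) {1..<n}"
      using g unfolding h_def by (rule bij_betw_cong[THEN iffD1, rotated]) auto
    then have "bij_betw h ((V - {x}) \<union> {x}) ({1..<n} \<union> {0})"
      using notIn_Un_bij_betw[of x "V - {x}" h] unfolding h_def by simp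
    moreover have "0 < n" using cV fin x card_gt_0_iff by blast
    then have "{1..<n} \<union> {0} = {0..<n}" by auto
    moreover have "(V - {x}) \<union> {x} = V" using x by blast
    ultimately show ?thesis by simp
  qed
  have "g u \<in> {1..<n}" if "u \<in> V" "u \<noteq> x" for u
    using g that unfolding bij_betw_def by blast
  then have h0: "u \<in> V \<Longrightarrow> h u = 0 \<longleftrightarrow> u = x" for u
    unfolding h_def by (cases "u = x") force+
  have "E u v \<longleftrightarrow> star_edges (h u) (h v)" if u: "u \<in> V" and v: "v \<in> V" for u v
  proof -
    have "h u = h v \<longleftrightarrow> u = v" using bij_betw_imp_inj_on[OF h_bij] u v by (auto dest: inj_onD)
    then show ?thesis using edges[OF u v] h0[OF u] h0[OF v] unfolding star_edges_def by argo
  qed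
  then show ?thesis unfolding is_star_def graph_iso_def using h_bij by (intro exI[of _ h]) simp
qed

lemma acyclic_universal_vertex_is_star:
  assumes sg: "simple_graph V E" and ac: "acyclic_graph V E" and x: "x \<in> V"
    and cV: "card V = n" and adj: "\<And>v. v \<in> V \<Longrightarrow> v \<noteq> x \<Longrightarrow> E v x"
  shows "is_star V E n"
proof (rule is_star_if_edges_through_centre[OF _ x cV])
  show "finite V" using sg unfolding simple_graph_def by blast
  have sym: "\<And>a b. E a b \<Longrightarrow> E b a" and irr: "\<And>a. \<not> E a a"
    using sg unfolding simple_graph_def by blast+
  fix u v assume "u \<in> V" "v \<in> V"
  show "E u v \<longleftrightarrow> u \<noteq> v \<and> (u = x \<or> v = x)"
  proof
    assume "E u v"
    then show "u \<noteq> v \<and> (u = x \<or> v = x)"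
      using acyclic_universal_vertex_on_every_edge[OF sg ac x adj] irr by blast
  next
    assume "u \<noteq> v \<and> (u = x \<or> v = x)"
    then show "E u v" using adj[OF \<open>u \<in> V\<close>] sym[OF adj[OF \<open>v \<in> V\<close>]] by auto
  qed
qed

lemma rdrd_funD:
  assumes "rdrd_fun V E f" and "v \<in> V"
  shows "f v \<le> 3"
    and "f v = 0 \<Longrightarrow> 2 \<le> card {w. E v w \<and> f w = 2} \<or> (\<exists>w. E v w \<and> f w = 3)"
    and "f v = 1 \<Longrightarrow> \<exists>w. E v w \<and> (f w = 2 \<or> f w = 3)"
    and "f v = 0 \<Longrightarrow> \<exists>w. E v w \<and> f w = 0"
  using assms unfolding rdrd_fun_def by auto

lemma weight_add_card_zeros:
  assumes "finite V"
  shows "weight V f + card {v\<in>V. f v = 0} = card V + (\<Sum>v\<in>{v\<in>V. 2 \<le> f v}. f v - 1)"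
proof -
  have "card {v\<in>V. f v = 0} = (\<Sum>v\<in>V. if f v = 0 then 1 else 0)"
    using sum.inter_filter[OF assms, of "\<lambda>_. 1::nat" "\<lambda>v. f v = 0"] by simp
  then have "weight V f + card {v\<in>V. f v = 0} = (\<Sum>v\<in>V. f v + (if f v = 0 then 1 else 0))"
    unfolding weight_def by (simp add: sum.distrib)
  also have "\<dots> = (\<Sum>v\<in>V. 1 + (if 2 \<le> f v then f v - 1 else 0))"
    by (rule sum.cong) auto
  also have "\<dots> = (\<Sum>v\<in>V. 1) + (\<Sum>v\<in>V. if 2 \<le> f v then f v - 1 else 0)"
    by (rule sum.distrib)
  also have "\<dots> = card V + (\<Sum>v\<in>{v\<in>V. 2 \<le> f v}. f v - 1)"
    unfolding sum.inter_filter[OF assms] by simp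
  finally show ?thesis .
qed

lemma rdrd_excess_without_zeros:
  assumes sg: "simple_graph V E" and ac: "acyclic_graph V E" and "V \<noteq> {}"
    and cV: "card V = n" and not_star: "\<not> is_star V E n"
    and f: "rdrd_fun V E f" and no_zero: "\<And>v. v \<in> V \<Longrightarrow> f v \<noteq> 0"
  shows "2 \<le> (\<Sum>v\<in>{v\<in>V. 2 \<le> f v}. f v - 1)"
proof (rule ccontr)
  let ?H = "{v\<in>V. 2 \<le> f v}"
  assume "\<not> ?thesis"
  then have small: "(\<Sum>v\<in>?H. f v - 1) \<le> 1" by simp
  have fin: "finite ?H" and inV: "\<And>a b. E a b \<Longrightarrow> b \<in> V"
    using sg unfolding simple_graph_def by auto
  have "(\<Sum>v\<in>?H. 1) \<le> (\<Sum>v\<in>?H. f v - 1)" by (rule sum_mono) auto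
  then have "card ?H \<le> 1" using small by simp
  have dominated: "\<exists>u\<in>?H. E v u" if "v \<in> V" "v \<notin> ?H" for v
  proof -
    have "f v = 1" using that no_zero[of v] by simp
    then show ?thesis using rdrd_funD(3)[OF f \<open>v \<in> V\<close>] inV by force
  qed
  obtain v0 where "v0 \<in> V" using \<open>V \<noteq> {}\<close> by blast
  then have "?H \<noteq> {}" using dominated by blast
  then obtain x where H: "?H = {x}"
    using \<open>card ?H \<le> 1\<close> fin by (metis card_0_eq card_1_singletonE le_antisym less_one not_le)
  then have "x \<in> V" by blast
  have "E v x" if "v \<in> V" "v \<noteq> x" for v
    using dominated[of v] that unfolding H by simp
  then have "is_star V E n"
    using acyclic_universal_vertex_is_star[OF sg ac \<open>x \<in> V\<close> cV] by blast
  then show False using not_star by simp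
qed

lemma rdrd_zero_vertex_excess:
  assumes sg: "simple_graph V E" and f: "rdrd_fun V E f" and v: "v \<in> V" "f v = 0"
  shows "2 \<le> (\<Sum>x\<in>{x\<in>V. 2 \<le> f x \<and> E v x}. f x - 1)"
proof -
  let ?N = "{x\<in>V. 2 \<le> f x \<and> E v x}"
  have fN: "finite ?N" and inV: "\<And>a b. E a b \<Longrightarrow> b \<in> V"
    using sg unfolding simple_graph_def by auto
  from rdrd_funD(2)[OF f v] show ?thesis
  proof
    assume two: "2 \<le> card {u. E v u \<and> f u = 2}"
    have "{u. E v u \<and> f u = 2} \<subseteq> ?N" using inV by auto
    then have "(\<Sum>x\<in>{u. E v u \<and> f u = 2}. f x - 1) \<le> (\<Sum>x\<in>?N. f x - 1)"
      by (rule sum_mono2[OF fN]) simp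
    then show ?thesis using two by simp
  next
    assume "\<exists>u. E v u \<and> f u = 3"
    then obtain u where u: "E v u" "f u = 3" by blast
    then have "u \<in> ?N" using inV by auto
    then show ?thesis using member_le_sum[OF \<open>u \<in> ?N\<close> _ fN, of "\<lambda>x. f x - 1"] u by simp
  qed
qed

text \<open>The vertices of \<open>S\<close> other than the root whose parent lies outside \<open>S\<close> each have
  a child in \<open>S\<close>, and so does the root; these children are distinct.\<close>
lemma card_parentless_le:
  assumes p: "parent_map E r p" and fin: "finite S" and r: "r \<in> S"
    and no_isolated: "\<And>v. v \<in> S \<Longrightarrow> \<exists>w\<in>S. E v w"
  shows "2 * card {t\<in>S. t \<noteq> r \<and> p t \<notin> S} + 2 \<le> card S"
proof -
  let ?T = "{t\<in>S. t \<noteq> r \<and> p t \<notin> S}"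
  have fT: "finite ?T" using fin by simp
  have child: "\<exists>c. c \<in> S \<and> c \<noteq> r \<and> p c = t" if "t \<in> S" "t = r \<or> p t \<notin> S" for t
  proof -
    obtain c where "c \<in> S" "E t c" using no_isolated \<open>t \<in> S\<close> by blast
    then show ?thesis using p that unfolding parent_map_def by blast
  qed
  define ch where "ch t = (SOME c. c \<in> S \<and> c \<noteq> r \<and> p c = t)" for t
  have chT: "ch t \<in> S" "ch t \<noteq> r" "p (ch t) = t" if "t \<in> ?T" for t
    using someI_ex[OF child] that unfolding ch_def by auto
  have q: "ch r \<in> S" "ch r \<noteq> r" "p (ch r) = r"
    using someI_ex[OF child[OF r]] unfolding ch_def by auto
  have inj: "inj_on ch ?T" by (rule inj_on_inverseI[of _ p]) (rule chT(3))
  have "ch t \<notin> ?T" "ch t \<notin> {r, ch r}" if "t \<in> ?T" for t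
    using chT[OF that] q(3) that by auto
  moreover have "r \<notin> ?T" "ch r \<notin> ?T" using q(3) r by auto
  ultimately have disj1: "?T \<inter> ch ` ?T = {}" and disj2: "(?T \<union> ch ` ?T) \<inter> {r, ch r} = {}"
    by blast+
  have "card (?T \<union> ch ` ?T \<union> {r, ch r}) = card ?T + card ?T + 2"
    using card_Un_disjoint[OF _ _ disj2] card_Un_disjoint[OF fT _ disj1] fT card_image[OF inj]
      q(2) by simp
  moreover have "?T \<union> ch ` ?T \<union> {r, ch r} \<subseteq> S" using chT(1) q(1) r by auto
  then have "card (?T \<union> ch ` ?T \<union> {r, ch r}) \<le> card S" by (rule card_mono[OF fin])
  ultimately show ?thesis by linarith
qed

text \<open>Each \<open>x \<notin> S\<close> has all its neighbours in \<open>S\<close> among its children, except possibly its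
  parent, and a child of \<open>x\<close> in \<open>S\<close> is a parentless vertex of \<open>S\<close>.\<close>
lemma sum_card_neighbours_le_parentless:
  assumes p: "parent_map E r p" and fin: "finite S" "finite X" and disj: "X \<inter> S = {}"
  shows "(\<Sum>x\<in>X. card {v\<in>S. E v x} - 1) \<le> card {t\<in>S. t \<noteq> r \<and> p t \<notin> S}"
proof -
  define C where "C x = {c\<in>S. c \<noteq> r \<and> p c = x}" for x
  have fC: "finite (C x)" for x using fin unfolding C_def by simp
  have "card {v\<in>S. E v x} - 1 \<le> card (C x)" for x
  proof -
    have "{v\<in>S. E v x} \<subseteq> insert (p x) (C x)"
      using p unfolding parent_map_def C_def by blast
    then have "card {v\<in>S. E v x} \<le> card (insert (p x) (C x))"
      by (rule card_mono[rotated]) (simp add: fC)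
    also have "\<dots> \<le> Suc (card (C x))" by (simp add: card_insert_if fC)
    finally show ?thesis by simp
  qed
  then have "(\<Sum>x\<in>X. card {v\<in>S. E v x} - 1) \<le> (\<Sum>x\<in>X. card (C x))"
    by (rule sum_mono)
  also have "\<dots> = card (\<Union>(C ` X))"
    by (rule card_UN_disjoint[symmetric]) (auto simp: fin fC C_def)
  also have "\<dots> \<le> card {t\<in>S. t \<noteq> r \<and> p t \<notin> S}"
    using disj fin unfolding C_def by (intro card_mono) auto
  finally show ?thesis .
qed

lemma mult_le_add_double_pred:
  fixes w d :: nat
  assumes "w \<le> 2"
  shows "w * d \<le> w + 2 * (d - 1)"
  using assms by (cases d) (auto simp: mult_le_mono1)

lemma rdrd_zeros_double_count:
  assumes sg: "simple_graph V E" and f: "rdrd_fun V E f"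
  shows "2 * card {v\<in>V. f v = 0}
    \<le> (\<Sum>x\<in>{x\<in>V. 2 \<le> f x}. (f x - 1) * card {v\<in>V. f v = 0 \<and> E v x})"
proof -
  let ?Z = "{v\<in>V. f v = 0}" and ?H = "{x\<in>V. 2 \<le> f x}"
  have fin: "finite ?Z" "finite ?H" using sg unfolding simple_graph_def by auto
  have "2 * card ?Z = (\<Sum>v\<in>?Z. 2)" by simp
  also have "\<dots> \<le> (\<Sum>v\<in>?Z. \<Sum>x\<in>{x\<in>?H. E v x}. f x - 1)"
    using rdrd_zero_vertex_excess[OF sg f] by (intro sum_mono) (simp add: conj_assoc)
  also have "\<dots> = (\<Sum>x\<in>?H. \<Sum>v\<in>{v\<in>?Z. E v x}. f x - 1)"
    by (rule sum.swap_restrict[OF fin])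
  also have "\<dots> = (\<Sum>x\<in>?H. (f x - 1) * card {v\<in>V. f v = 0 \<and> E v x})"
    by (simp add: mult.commute conj_assoc)
  finally show ?thesis .
qed

lemma rdrd_excess_with_zero:
  assumes t: "is_tree V E" and f: "rdrd_fun V E f" and r: "r \<in> V" "f r = 0"
  shows "card {v\<in>V. f v = 0} + 2 \<le> (\<Sum>x\<in>{x\<in>V. 2 \<le> f x}. f x - 1)"
proof -
  let ?Z = "{v\<in>V. f v = 0}" and ?H = "{x\<in>V. 2 \<le> f x}"
  let ?d = "\<lambda>x. card {v\<in>?Z. E v x}"
  have sg: "simple_graph V E" using t unfolding is_tree_def by blast
  have fin: "finite ?Z" "finite ?H" and inV: "\<And>a b. E a b \<Longrightarrow> b \<in> V"
    using sg unfolding simple_graph_def by auto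
  obtain p where p: "parent_map E r p" using tree_has_parent_map[OF t r(1)] by blast
  let ?T = "{t\<in>?Z. t \<noteq> r \<and> p t \<notin> ?Z}"
  have "2 * card ?Z \<le> (\<Sum>x\<in>?H. (f x - 1) * ?d x)"
    using rdrd_zeros_double_count[OF sg f] by (simp add: conj_assoc)
  also have "\<dots> \<le> (\<Sum>x\<in>?H. (f x - 1) + 2 * (?d x - 1))"
  proof (rule sum_mono)
    fix x assume "x \<in> ?H"
    then have "f x - 1 \<le> 2" using rdrd_funD(1)[OF f] by fastforce
    then show "(f x - 1) * ?d x \<le> (f x - 1) + 2 * (?d x - 1)" by (rule mult_le_add_double_pred)
  qed
  also have "\<dots> = (\<Sum>x\<in>?H. f x - 1) + 2 * (\<Sum>x\<in>?H. ?d x - 1)"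
    by (simp only: sum.distrib sum_distrib_left)
  finally have double_count: "2 * card ?Z \<le> (\<Sum>x\<in>?H. f x - 1) + 2 * (\<Sum>x\<in>?H. ?d x - 1)" .
  have "(\<Sum>x\<in>?H. ?d x - 1) \<le> card ?T"
    by (rule sum_card_neighbours_le_parentless[OF p fin]) auto
  moreover have "2 * card ?T + 2 \<le> card ?Z"
  proof (rule card_parentless_le[OF p fin(1)])
    show "r \<in> ?Z" using r by simp
    fix v assume "v \<in> ?Z"
    then obtain w where "E v w" "f w = 0" using rdrd_funD(4)[OF f] by blast
    then show "\<exists>w\<in>?Z. E v w" using inV by blast
  qed
  ultimately show ?thesis using double_count by linarith
qed

lemma rdrd_weight_ge:
  assumes t: "is_tree V E" and cV: "card V = n" and not_star: "\<not> is_star V E n"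
    and f: "rdrd_fun V E f"
  shows "n + 2 \<le> weight V f"
proof -
  have sg: "simple_graph V E" and ac: "acyclic_graph V E" and "V \<noteq> {}"
    using t unfolding is_tree_def by auto
  have "card {v\<in>V. f v = 0} + 2 \<le> (\<Sum>x\<in>{x\<in>V. 2 \<le> f x}. f x - 1)"
  proof (cases "\<exists>r\<in>V. f r = 0")
    case True
    then show ?thesis using rdrd_excess_with_zero[OF t f] by blast
  next
    case False
    then have "card {v\<in>V. f v = 0} = 0" by (simp add: card_eq_0_iff)
    moreover have "2 \<le> (\<Sum>x\<in>{x\<in>V. 2 \<le> f x}. f x - 1)"
      using False by (intro rdrd_excess_without_zeros[OF sg ac \<open>V \<noteq> {}\<close> cV not_star f]) auto
    ultimately show ?thesis by linarith
  qed
  moreover have "finite V" using sg unfolding simple_graph_def by blast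
  ultimately show ?thesis using weight_add_card_zeros[of V f] cV by linarith
qed

lemma gamma_rdR_ge:
  assumes "finite V" and "\<And>f. rdrd_fun V E f \<Longrightarrow> k \<le> weight V f"
  shows "k \<le> gamma_rdR V E"
proof -
  let ?W = "{weight V f | f. rdrd_fun V E f}"
  have "?W \<subseteq> {..3 * card V}"
  proof
    fix s assume "s \<in> ?W"
    then obtain f where s: "s = weight V f" and f: "rdrd_fun V E f" by blast
    have "(\<Sum>v\<in>V. f v) \<le> (\<Sum>v\<in>V. 3)" using rdrd_funD(1)[OF f] by (rule sum_mono)
    then show "s \<in> {..3 * card V}" using s unfolding weight_def by simp
  qed
  then have "finite ?W" using finite_subset by blast
  moreover have "rdrd_fun V E (\<lambda>_. 3)" unfolding rdrd_fun_def by simp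
  then have "?W \<noteq> {}" by blast
  ultimately show ?thesis unfolding gamma_rdR_def using assms(2) by (subst Min_ge_iff) auto
qed

theorem theorem3p1:
  fixes V :: "'a set" and E :: "'a \<Rightarrow> 'a \<Rightarrow> bool" and n :: nat
  assumes "is_tree V E"
    and "card V = n"
    and "n \<ge> 2"
    and "\<not> is_star V E n"
  shows "gamma_rdR V E \<ge> n + 2"
proof (rule gamma_rdR_ge)
  show "finite V" using assms(1) unfolding is_tree_def simple_graph_def by blast
  show "n + 2 \<le> weight V f" if "rdrd_fun V E f" for f
    using rdrd_weight_ge[OF assms(1,2,4) that] .
qed

end
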